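(* Let $G=(V,E)$ be an unweighted graph with $n$ vertices, and let $e\in E$. Then $$ B_e^{2}\leq n. $$
   Context: $L=D-A$ is the Laplacian of the unweighted graph $G$, $L^{+}$ its Moore–Penrose pseudoinverse, $L^{2+}=(L^+)^2$, and $1_v$ the indicator vector of vertex $v$. The biharmonic distance is $B_{st}=\sqrt{(1_s-1_t)^{T}L^{2+}(1_s-1_t)}$, and $B_e:=B_{st}$ for an edge $e=\{s,t\}$. *)

theory Defs
  imports "HOL-Analysis.Analysis"
begin

definition simple_graph :: "('n::finite \<Rightarrow> 'n \<Rightarrow> bool) \<Rightarrow> bool" where
  "simple_graph E \<longleftrightarrow> (\<forall>u v. E u v \<longrightarrow> E v u) \<and> (\<forall>u. \<not> E u u)"

definition laplacian :: "('n::finite \<Rightarrow> 'n \<Rightarrow> bool) \<Rightarrow> real^'n^'n" where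
  "laplacian E = (\<chi> i j. (if i = j then real (card {k. E i k}) else 0)
                         - (if E i j then 1 else 0))"

definition pinv :: "real^'n::finite^'n \<Rightarrow> real^'n^'n" where
  "pinv A = (THE X. A ** X ** A = A \<and> X ** A ** X = X \<and>
                    transpose (A ** X) = A ** X \<and> transpose (X ** A) = X ** A)"

definition indic :: "'n::finite \<Rightarrow> real^'n" where
  "indic v = (\<chi> i. if i = v then 1 else 0)"

definition biharmonic_dist :: "('n::finite \<Rightarrow> 'n \<Rightarrow> bool) \<Rightarrow> 'n \<Rightarrow> 'n \<Rightarrow> real" where
  "biharmonic_dist E s t =
     (let L2 = pinv (laplacian E) ** pinv (laplacian E); x = indic s - indic t
      in sqrt (x \<bullet> (L2 *v x)))"

end

theory Submission
  imports Defs
begin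

text \<open>Let \<open>L\<close> be the Laplacian and \<open>y = L\<^sup>+ (1\<^sub>s - 1\<^sub>t)\<close>, so that \<open>B\<^sub>s\<^sub>t\<^sup>2 = |y|\<^sup>2\<close>.
Since \<open>1\<^sub>s - 1\<^sub>t\<close> is orthogonal to the null space of \<open>L\<close> (the vectors constant
across edges), \<open>y\<close> is the minimum-norm solution of \<open>L y = 1\<^sub>s - 1\<^sub>t\<close>, i.e. the
electrical potential of a unit current from \<open>s\<close> to \<open>t\<close>. Its energy
\<open>y\<^sup>T L y = y\<^sub>s - y\<^sub>t\<close> dominates the edge term \<open>(y\<^sub>s - y\<^sub>t)\<^sup>2\<close>, so the potential drop
lies in \<open>[0, 1]\<close>. Clamping \<open>y\<close> to \<open>[y\<^sub>t, y\<^sub>s]\<close> keeps \<open>y\<^sub>s, y\<^sub>t\<close> and does not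
increase the energy; as the energy of \<open>y + d\<close> with \<open>d\<^sub>s = d\<^sub>t\<close> is that of \<open>y\<close> plus that
of \<open>d\<close>, the clamped vector differs from \<open>y\<close> by a null vector. Shifted by \<open>-y\<^sub>t\<close> it
has entries in \<open>[0, 1]\<close>, hence squared norm at most \<open>n\<close>, and by minimality
\<open>|y|\<^sup>2 \<le> n\<close>.\<close>

lemma matrix_diff_ldistrib: "(A::'a::ring_1^'n^'m) ** (B - C) = A ** B - A ** C"
  by (simp add: matrix_matrix_mult_def vec_eq_iff sum_subtractf algebra_simps)

lemma matrix_diff_rdistrib: "(B - C) ** (A::'a::ring_1^'n^'m) = B ** A - C ** A"
  by (simp add: matrix_matrix_mult_def vec_eq_iff sum_subtractf algebra_simps)

lemma matrix_add_rdistrib: "(B + C) ** (A::'a::semiring_1^'n^'m) = B ** A + C ** A"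
  by (simp add: matrix_matrix_mult_def vec_eq_iff sum.distrib algebra_simps)

lemma transpose_diff: "transpose (A - B) = transpose A - transpose (B::'a::group_add^'n^'m)"
  by (simp add: transpose_def vec_eq_iff)

lemma symmetric_matrix_inner:
  "transpose A = A \<Longrightarrow> (A *v u) \<bullet> v = u \<bullet> (A *v (v::real^'n))"
  by (metis dot_lmul_matrix transpose_matrix_vector)

definition penrose :: "real^'n::finite^'n \<Rightarrow> real^'n^'n \<Rightarrow> bool" where
  "penrose A X \<longleftrightarrow> A ** X ** A = A \<and> X ** A ** X = X \<and>
     transpose (A ** X) = A ** X \<and> transpose (X ** A) = X ** A"

lemma penrose_unique:
  assumes "penrose A X" "penrose A Y"
  shows "X = Y"
proof -
  have X: "A ** X ** A = A" "X ** A ** X = X" "transpose (A ** X) = A ** X"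
      "transpose (X ** A) = X ** A"
    and Y: "A ** Y ** A = A" "Y ** A ** Y = Y" "transpose (A ** Y) = A ** Y"
      "transpose (Y ** A) = Y ** A"
    using assms by (auto simp: penrose_def)
  have "X = X ** transpose (A ** X)"
    using X(2,3) by (simp add: matrix_mul_assoc)
  also have "\<dots> = X ** transpose (A ** Y ** A ** X)"
    using Y(1) by simp
  also have "\<dots> = X ** transpose (A ** X) ** transpose (A ** Y)"
    by (simp add: matrix_transpose_mul matrix_mul_assoc)
  also have "\<dots> = X ** A ** Y"
    using X Y(3) by (simp add: matrix_mul_assoc)
  finally have XAY: "X = X ** A ** Y" .
  have "Y = transpose (Y ** A) ** Y"
    using Y(2,4) by simp
  also have "\<dots> = transpose (Y ** A ** X ** A) ** Y"
    using X(1) by (metis matrix_mul_assoc)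
  also have "\<dots> = transpose (X ** A) ** transpose (Y ** A) ** Y"
    by (simp add: matrix_transpose_mul matrix_mul_assoc)
  also have "\<dots> = X ** A ** Y"
    using X(4) Y(2,4) by (metis matrix_mul_assoc)
  finally show ?thesis
    using XAY by simp
qed

lemma pinv_eqI: "penrose A X \<Longrightarrow> pinv A = X"
  unfolding pinv_def by (rule the_equality) (auto simp: penrose_def intro: penrose_unique)

lemma symmetric_projection_matrix_exists:
  fixes K :: "(real^'n::finite) set"
  assumes "subspace K"
  obtains J :: "real^'n^'n"
  where "transpose J = J" "\<And>x. J *v x \<in> K" "\<And>z. z \<in> K \<Longrightarrow> J *v z = z"
proof -
  obtain B where B: "pairwise orthogonal B" "\<And>b. b \<in> B \<Longrightarrow> norm b = 1" "finite B"
      "span B = K"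
    by (metis orthonormal_basis_subspace[OF assms] independent_imp_finite)
  define J :: "real^'n^'n" where "J = (\<chi> i j. \<Sum>b\<in>B. b$i * b$j)"
  have J: "J *v x = (\<Sum>b\<in>B. (b \<bullet> x) *\<^sub>R b)" for x
    by (simp add: vec_eq_iff J_def matrix_vector_mult_def inner_vec_def sum_component
        sum_distrib_left sum_distrib_right mult_ac sum.swap[of _ B])
  have range: "J *v x \<in> K" for x
    unfolding J B(4)[symmetric] by (intro span_sum span_mul span_base)
  have "b \<bullet> (J *v x) = b \<bullet> x" if "b \<in> B" for b x
  proof -
    have "b \<bullet> (J *v x) = (\<Sum>c\<in>B. if c = b then b \<bullet> x else 0)"
      unfolding J inner_sum_right using B(1,2) that
      by (intro sum.cong refl) (auto simp: pairwise_def orthogonal_def norm_eq_1)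
    then show ?thesis
      using that B(3) by simp
  qed
  then have orth: "orthogonal z (x - J *v x)" if "z \<in> K" for z x
    using orthogonal_to_span[of z B "x - J *v x"] that B(4)
    by (simp add: orthogonal_def inner_commute inner_diff_right)
  then have id_on_K: "J *v z = z" if "z \<in> K" for z
  proof -
    have "orthogonal (z - J *v z) (z - J *v z)"
      using orth subspace_diff[OF assms that range] by blast
    then show ?thesis
      by (simp add: orthogonal_def)
  qed
  have "transpose J = J"
    by (simp add: J_def transpose_def vec_eq_iff mult.commute)
  with range id_on_K show ?thesis
    using that by blast
qed

lemma penrose_exists_symmetric:
  fixes A :: "real^'n::finite^'n"
  assumes symA: "transpose A = A"
  shows "\<exists>X. penrose A X"
proof -
  have "subspace {z. A *v z = 0}"
    by (auto simp: subspace_def algebra_simps)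
  then obtain J :: "real^'n^'n" where symJ: "transpose J = J"
    and range: "\<And>x. A *v (J *v x) = 0" and id_on_null: "\<And>z. A *v z = 0 \<Longrightarrow> J *v z = z"
    by (rule symmetric_projection_matrix_exists) blast
  have AJ: "A ** J = 0"
    using range by (simp add: matrix_eq flip: matrix_vector_mul_assoc)
  have JA: "J ** A = 0"
    by (metis AJ matrix_transpose_mul symA symJ transpose_iff transpose_mat mat_0)
  have JJ: "J ** J = J"
    using range id_on_null by (simp add: matrix_eq flip: matrix_vector_mul_assoc)
  \<comment> \<open>\<open>A + J\<close> is invertible: \<open>A\<close> and \<open>J\<close> act on complementary orthogonal subspaces.\<close>
  have "v = 0" if "(A + J) *v v = 0" for v
  proof -
    have "(J *v v) \<bullet> (A *v v) = 0"
      using symmetric_matrix_inner[OF symA, of "J *v v" v] range by simp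
    moreover have "(J *v v) \<bullet> (A *v v + J *v v) = 0"
      using that by (simp add: matrix_vector_mult_add_rdistrib)
    ultimately have Jv: "J *v v = 0"
      by (simp add: inner_add_right)
    then have "A *v v = 0"
      using that by (simp add: matrix_vector_mult_add_rdistrib)
    then show ?thesis
      using id_on_null Jv by simp
  qed
  then obtain N where NM: "N ** (A + J) = mat 1"
    using matrix_left_invertible_ker by blast
  then have MN: "(A + J) ** N = mat 1"
    using matrix_left_right_inverse by blast
  have "(A + J) ** J = J"
    by (simp add: matrix_add_rdistrib AJ JJ)
  then have NJ: "N ** J = J"
    using NM by (metis matrix_mul_assoc matrix_mul_lid)
  have "J ** (A + J) = J"
    by (simp add: matrix_add_ldistrib JA JJ)
  then have JN: "J ** N = J"
    using MN by (metis matrix_mul_assoc matrix_mul_rid)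
  define X where "X = N - J"
  have AX: "A ** X = mat 1 - J"
    using MN by (simp add: X_def matrix_diff_ldistrib AJ JN matrix_add_rdistrib eq_diff_eq)
  have XA: "X ** A = mat 1 - J"
    using NM by (simp add: X_def matrix_diff_rdistrib JA NJ matrix_add_ldistrib eq_diff_eq)
  have "penrose A X"
    unfolding penrose_def
  proof (intro conjI)
    show "A ** X ** A = A"
      by (simp add: AX matrix_diff_rdistrib JA)
    have "J ** X = 0"
      by (simp add: X_def matrix_diff_ldistrib JN JJ)
    then show "X ** A ** X = X"
      by (simp add: XA matrix_diff_rdistrib)
    show "transpose (A ** X) = A ** X" "transpose (X ** A) = X ** A"
      by (simp_all add: AX XA transpose_diff symJ)
  qed
  then show ?thesis ..
qed

context
  fixes A :: "real^'n::finite^'n"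
  assumes symA: "transpose A = A"
begin

lemma penrose_pinv_symmetric: "penrose A (pinv A)"
  using penrose_exists_symmetric[OF symA] pinv_eqI by blast

lemma transpose_pinv_symmetric: "transpose (pinv A) = pinv A"
proof -
  have "penrose A (transpose (pinv A))"
    using penrose_pinv_symmetric symA unfolding penrose_def
    by (metis matrix_transpose_mul matrix_mul_assoc transpose_transpose)
  then show ?thesis
    by (rule pinv_eqI[symmetric])
qed

lemma pinv_commute_symmetric: "A ** pinv A = pinv A ** A"
  using penrose_pinv_symmetric transpose_pinv_symmetric symA
  by (metis matrix_transpose_mul penrose_def)

lemma inner_pinv_square_symmetric:
  "x \<bullet> ((pinv A ** pinv A) *v x) = (pinv A *v x) \<bullet> (pinv A *v x)"
  using symmetric_matrix_inner[OF transpose_pinv_symmetric]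
  by (simp flip: matrix_vector_mul_assoc)

lemma pinv_orthogonal_null_space:
  assumes "A *v z = 0"
  shows "(pinv A *v x) \<bullet> z = 0"
proof -
  have "pinv A = A ** (pinv A ** pinv A)"
    using penrose_pinv_symmetric pinv_commute_symmetric
    by (metis matrix_mul_assoc penrose_def)
  then have "pinv A *v x = A *v ((pinv A ** pinv A) *v x)"
    by (metis matrix_vector_mul_assoc)
  then show ?thesis
    using symmetric_matrix_inner[OF symA] assms by simp
qed

lemma pinv_min_norm:
  assumes "A *v (w - pinv A *v x) = 0"
  shows "(pinv A *v x) \<bullet> (pinv A *v x) \<le> w \<bullet> w"
proof -
  define y k where "y = pinv A *v x" and "k = w - pinv A *v x"
  have "w \<bullet> w = y \<bullet> y + 2 * (y \<bullet> k) + k \<bullet> k"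
    by (simp add: y_def k_def algebra_simps inner_diff_left inner_diff_right inner_commute)
  then show ?thesis
    using pinv_orthogonal_null_space[OF assms] by (simp add: y_def k_def)
qed

lemma pinv_solves_symmetric:
  assumes "\<And>z. A *v z = 0 \<Longrightarrow> x \<bullet> z = 0"
  shows "A *v (pinv A *v x) = x"
proof -
  define r where "r = x - A *v (pinv A *v x)"
  have "A ** A ** pinv A = A"
    using penrose_pinv_symmetric pinv_commute_symmetric
    by (metis matrix_mul_assoc penrose_def)
  then have "A *v (A *v (pinv A *v x)) = A *v x"
    by (metis matrix_vector_mul_assoc)
  then have "A *v r = 0"
    by (simp add: r_def matrix_vector_mult_diff_distrib)
  then have "x \<bullet> r = 0" and "(A *v (pinv A *v x)) \<bullet> r = 0"
    using assms symmetric_matrix_inner[OF symA] by simp_all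
  then have "r \<bullet> r = 0"
    by (simp add: r_def inner_diff_left)
  then show ?thesis
    by (simp add: r_def)
qed

end

lemma clamp_real_mem: "a \<le> b \<Longrightarrow> clamp a b x \<in> {a..(b::real)}"
  using clamp_in_interval[of a b x] by simp

lemma clamp_real_id: "x \<in> {a..b} \<Longrightarrow> clamp a b x = (x::real)"
  using clamp_cancel_cbox[of x a b] by simp

lemma laplacian_mult_vec:
  "(laplacian E *v z) $ u = (\<Sum>v\<in>UNIV. if E u v then z$u - z$v else 0)"
proof -
  have "(laplacian E *v z) $ u = real (card {v. E u v}) * z$u - (\<Sum>v | E u v. z$v)"
    by (simp add: matrix_vector_mult_def laplacian_def left_diff_distrib sum_subtractf
        if_distrib[where f="\<lambda>c. c * _"] sum.If_cases cong: if_cong)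
  also have "\<dots> = (\<Sum>v\<in>UNIV. if E u v then z$u - z$v else 0)"
    by (simp add: sum.If_cases sum_subtractf)
  finally show ?thesis .
qed

lemma transpose_laplacian: "simple_graph E \<Longrightarrow> transpose (laplacian E) = laplacian E"
  by (auto simp: simple_graph_def transpose_def laplacian_def vec_eq_iff)

lemma laplacian_quadratic_form:
  assumes "simple_graph E"
  shows "z \<bullet> (laplacian E *v z) =
    (\<Sum>u\<in>UNIV. \<Sum>v\<in>UNIV. if E u v then (z$u - z$v)^2 else 0) / 2"
proof -
  define f where "f u v = (if E u v then z$u * (z$u - z$v) else 0)" for u v
  have sym: "E u v = E v u" for u v
    using assms by (auto simp: simple_graph_def)
  have form: "z \<bullet> (laplacian E *v z) = (\<Sum>u\<in>UNIV. \<Sum>v\<in>UNIV. f u v)"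
    by (simp add: f_def inner_vec_def laplacian_mult_vec sum_distrib_left if_distrib cong: if_cong)
  also have "\<dots> = (\<Sum>u\<in>UNIV. \<Sum>v\<in>UNIV. f v u)"
    by (rule sum.swap)
  finally have "2 * (z \<bullet> (laplacian E *v z)) = (\<Sum>u\<in>UNIV. \<Sum>v\<in>UNIV. f u v + f v u)"
    using form by (simp add: sum.distrib)
  also have "\<dots> = (\<Sum>u\<in>UNIV. \<Sum>v\<in>UNIV. if E u v then (z$u - z$v)^2 else 0)"
    by (intro sum.cong refl) (auto simp: f_def sym power2_eq_square algebra_simps)
  finally show ?thesis
    by simp
qed

lemma laplacian_quadratic_form_nonneg: "simple_graph E \<Longrightarrow> 0 \<le> z \<bullet> (laplacian E *v z)"
  by (simp add: laplacian_quadratic_form sum_nonneg)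

lemma laplacian_quadratic_form_edge:
  assumes "simple_graph E" "E s t"
  shows "(z$s - z$t)^2 \<le> z \<bullet> (laplacian E *v z)"
proof -
  define f where "f = (\<lambda>(u, v). if E u v then (z$u - z$v)^2 else 0)"
  have "s \<noteq> t" "E t s"
    using assms by (auto simp: simple_graph_def)
  then have "2 * (z$s - z$t)^2 = (\<Sum>p\<in>{(s, t), (t, s)}. f p)"
    using assms(2) by (simp add: f_def power2_commute)
  also have "\<dots> \<le> (\<Sum>p\<in>UNIV. f p)"
    by (intro sum_mono2) (auto simp: f_def split: if_splits)
  also have "\<dots> = 2 * (z \<bullet> (laplacian E *v z))"
    by (simp add: laplacian_quadratic_form[OF assms(1)] f_def
        flip: UNIV_Times_UNIV sum.cartesian_product)
  finally show ?thesis
    by simp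
qed

lemma laplacian_locally_constant_null:
  "(\<forall>u v. E u v \<longrightarrow> z$u = z$v) \<Longrightarrow> laplacian E *v z = 0"
  by (simp add: vec_eq_iff laplacian_mult_vec cong: if_cong)

lemma laplacian_quadratic_form_eq_0_iff:
  assumes "simple_graph E"
  shows "z \<bullet> (laplacian E *v z) = 0 \<longleftrightarrow> (\<forall>u v. E u v \<longrightarrow> z$u = z$v)"
proof
  assume Q0: "z \<bullet> (laplacian E *v z) = 0"
  show "\<forall>u v. E u v \<longrightarrow> z$u = z$v"
  proof (intro allI impI)
    fix u v
    assume "E u v"
    then have "(z$u - z$v)^2 \<le> 0"
      using laplacian_quadratic_form_edge[OF assms] Q0 by metis
    then show "z$u = z$v"
      by simp
  qed
qed (simp add: laplacian_locally_constant_null)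

lemma laplacian_null_iff:
  assumes "simple_graph E"
  shows "laplacian E *v z = 0 \<longleftrightarrow> (\<forall>u v. E u v \<longrightarrow> z$u = z$v)"
  using laplacian_quadratic_form_eq_0_iff[OF assms, of z] laplacian_locally_constant_null
  by auto

lemma laplacian_quadratic_form_clamp_le:
  assumes "simple_graph E"
  shows "(\<chi> v. clamp a b (z$v)) \<bullet> (laplacian E *v (\<chi> v. clamp a b (z$v)))
    \<le> z \<bullet> (laplacian E *v z)"
proof -
  have "(clamp a b p - clamp a b q)^2 \<le> (p - q)^2" for p q :: real
    using dist_clamps_le_dist_args[of a b p q] by (simp add: dist_real_def abs_le_square_iff)
  then show ?thesis
    unfolding laplacian_quadratic_form[OF assms]
    by (intro divide_right_mono sum_mono) auto
qed

lemma inner_indic: "indic s \<bullet> v = v$s" "v \<bullet> indic s = v$s"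
  by (simp_all add: indic_def inner_vec_def if_distrib[where f="\<lambda>c. c * _"]
      if_distrib[where f="\<lambda>c. _ * c"] cong: if_cong)

context
  fixes E :: "'n::finite \<Rightarrow> 'n \<Rightarrow> bool" and s t :: 'n and y :: "real^'n"
  assumes G: "simple_graph E" and st: "E s t"
    and potential: "laplacian E *v y = indic s - indic t"
begin

lemma edge_potential_drop: "0 \<le> y$s - y$t \<and> y$s - y$t \<le> 1"
proof -
  have Q: "y \<bullet> (laplacian E *v y) = y$s - y$t"
    by (simp add: potential inner_diff_right inner_commute inner_indic)
  have "0 \<le> y$s - y$t"
    using laplacian_quadratic_form_nonneg[OF G, of y] Q by simp
  moreover have "(y$s - y$t) * (y$s - y$t) \<le> y$s - y$t"
    using laplacian_quadratic_form_edge[OF G st, of y] Q by (simp add: power2_eq_square)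
  ultimately show ?thesis
    by (auto simp: mult_le_cancel_left2)
qed

lemma edge_potential_clamp:
  "laplacian E *v ((\<chi> v. clamp (y$t) (y$s) (y$v)) - y) = 0"
proof -
  define L where "L = laplacian E"
  define w where "w = (\<chi> v. clamp (y$t) (y$s) (y$v))"
  define d where "d = w - y"
  have "y$t \<le> y$s"
    using edge_potential_drop by simp
  then have "w$s = y$s" "w$t = y$t"
    by (simp_all add: w_def clamp_real_id)
  then have dLy: "d \<bullet> (L *v y) = 0"
    by (simp add: L_def d_def potential inner_diff_right inner_indic)
  have "w \<bullet> (L *v w) = y \<bullet> (L *v y) + 2 * (d \<bullet> (L *v y)) + d \<bullet> (L *v d)"
    using symmetric_matrix_inner[OF transpose_laplacian[OF G], of y d]
    by (simp add: L_def d_def algebra_simps inner_diff_left inner_diff_right inner_commute)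
  moreover have "w \<bullet> (L *v w) \<le> y \<bullet> (L *v y)"
    unfolding L_def w_def by (rule laplacian_quadratic_form_clamp_le[OF G])
  ultimately have "d \<bullet> (L *v d) = 0"
    using dLy laplacian_quadratic_form_nonneg[OF G, of d] by (simp add: L_def)
  then show ?thesis
    using laplacian_quadratic_form_eq_0_iff[OF G] laplacian_null_iff[OF G]
    by (simp add: L_def d_def w_def)
qed

end

theorem theoremA3:
  fixes E :: "'n::finite \<Rightarrow> 'n \<Rightarrow> bool" and s t :: 'n
  assumes "simple_graph E" and "E s t"
  shows "(biharmonic_dist E s t)\<^sup>2 \<le> real CARD('n)"
proof -
  define x where "x = indic s - indic t"
  define y where "y = pinv (laplacian E) *v x"
  note symL = transpose_laplacian[OF assms(1)]
  have B: "(biharmonic_dist E s t)\<^sup>2 = y \<bullet> y"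
    using inner_pinv_square_symmetric[OF symL, of x]
    by (simp add: biharmonic_dist_def Let_def x_def y_def)
  have "x \<bullet> z = 0" if "laplacian E *v z = 0" for z
    using that laplacian_null_iff[OF assms(1)] assms(2)
    by (simp add: x_def inner_diff_left inner_indic)
  then have potential: "laplacian E *v y = indic s - indic t"
    unfolding y_def x_def[symmetric] by (rule pinv_solves_symmetric[OF symL])
  note drop = edge_potential_drop[OF assms potential]
  define w where "w = (\<chi> v. clamp (y$t) (y$s) (y$v) - y$t)"
  have "laplacian E *v (w - y) = 0"
    using edge_potential_clamp[OF assms potential]
    by (simp add: w_def laplacian_null_iff[OF assms(1)])
  then have "y \<bullet> y \<le> w \<bullet> w"
    unfolding y_def by (rule pinv_min_norm[OF symL])
  also have "\<dots> \<le> (\<Sum>v\<in>(UNIV::'n set). 1)"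
    unfolding inner_vec_def inner_real_def
  proof (intro sum_mono)
    fix v
    have "w$v \<in> {0..y$s - y$t}"
      using clamp_real_mem[of "y$t" "y$s" "y$v"] drop by (auto simp: w_def)
    then show "w$v * w$v \<le> 1"
      using drop by (auto intro: mult_le_one)
  qed
  finally show ?thesis
    using B by simp
qed

end
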